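(* (a) The map $\Phi$ is reversible with respect to the involution $\sigma(p,u)=(u,p)$: $\Phi^{-1}(p,u)=\sigma\circ\Phi(u,p)$ (wherever defined). (b) For the trajectory $T_n$ with coordinates $(p_j,u_j)$, $u_j=p_{n-j}$ for $0\le j\le n$; in particular $u_n=p_0$. (c) If $n=2k$ then $p_k=u_k$; if $n=2k-1$ then $p_{k-1}=u_k=1$.
   Context: $\Phi$ is the partial map of $\mathbb{R}^2$ defined for $p\ne0$ by $\Phi(p,u)=\bigl(p^2(u+1)-1,\ 1/p\bigr)$. For $n\ge1$, the trajectory $T_n$ is the (existing and unique) finite sequence $(p_j,u_j)$, $j=0,\dots,n$, with $(p_j,u_j)=\Phi(p_{j-1},u_{j-1})$ for $1\le j\le n$, $u_0=0$, $p_n=0$, and $p_j>0$ for $0\le j\le n-1$. *)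

theory Defs
  imports Complex_Main
begin

text \<open>The map Phi(p,u) = (p^2 (u+1) - 1, 1/p); it is only meaningful for p \<noteq> 0
  (in HOL, 1/0 = 0, so every use is guarded by p \<noteq> 0).\<close>
definition Phi :: "real \<times> real \<Rightarrow> real \<times> real" where
  "Phi pu = (case pu of (p, u) \<Rightarrow> (p^2 * (u + 1) - 1, 1 / p))"

definition sigma :: "real \<times> real \<Rightarrow> real \<times> real" where
  "sigma pu = (case pu of (p, u) \<Rightarrow> (u, p))"

definition trajectory :: "nat \<Rightarrow> (nat \<Rightarrow> real) \<Rightarrow> (nat \<Rightarrow> real) \<Rightarrow> bool" where
  "trajectory n p u \<longleftrightarrow> 1 \<le> n \<and> u 0 = 0 \<and> p n = 0 \<and>
     (\<forall>j<n. p j > 0) \<and>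
     (\<forall>j. 1 \<le> j \<and> j \<le> n \<longrightarrow> (p j, u j) = Phi (p (j - 1), u (j - 1)))"

end

theory Submission
  imports Defs
begin

text \<open>By reversibility, reading a trajectory backwards with the coordinates swapped gives
  again a trajectory of the same length. A trajectory is determined by its starting point,
  and the starting point is determined by the length: along trajectories both p and p (u + 1)
  depend strictly monotonically on p(0), so p(n) = 0 can hold for at most one p(0). Hence the
  reversed trajectory coincides with the original one. For odd n = 2k - 1 the middle
  relations u(k) = p(k - 1) and u(k) = 1 / p(k - 1) force p(k - 1) = 1.\<close>

lemma Phi_Pair: "Phi (p, u) = (p\<^sup>2 * (u + 1) - 1, 1 / p)"
  by (simp add: Phi_def)

lemma sigma_Pair [simp]: "sigma (p, u) = (u, p)"
  by (simp add: sigma_def)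

lemma sigma_sigma [simp]: "sigma (sigma x) = x"
  by (cases x) simp

lemma Phi_sigma_Phi_sigma: "u \<noteq> 0 \<Longrightarrow> Phi (sigma (Phi (sigma (p, u)))) = (p, u)"
  by (simp add: Phi_Pair power2_eq_square)

lemma sigma_Phi_sigma_Phi: "p \<noteq> 0 \<Longrightarrow> sigma (Phi (sigma (Phi (p, u)))) = (p, u)"
  by (simp add: Phi_Pair power2_eq_square)

lemma Phi_swap_inverse:
  assumes "p \<noteq> 0" and "Phi (p, u) = (p', u')"
  shows "Phi (u', p') = (u, p)"
proof -
  have "sigma (Phi (u', p')) = (p, u)"
    using sigma_Phi_sigma_Phi[OF assms(1), of u] by (simp only: assms(2) sigma_Pair)
  from arg_cong[OF this, of sigma] show ?thesis
    by simp
qed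

lemma Phi_strict_mono:
  assumes "0 < p" "p < q" "0 < p * (u + 1)" "p * (u + 1) < q * (v + 1)"
    and "Phi (p, u) = (p', u')" "Phi (q, v) = (q', v')"
  shows "p' < q'" and "p' * (u' + 1) < q' * (v' + 1)"
proof -
  have "p * (p * (u + 1)) < q * (q * (v + 1))"
    using mult_strict_mono[OF assms(2,4)] assms(1-3) by simp
  then show "p' < q'"
    using assms(5,6) by (auto simp: Phi_Pair power2_eq_square mult.assoc)
  \<comment> \<open>p' (u' + 1) = p' + p' / p and p' / p = p (u + 1) - 1 / p\<close>
  have "p' * (u' + 1) = p' + p * (u + 1) - 1 / p" "q' * (v' + 1) = q' + q * (v + 1) - 1 / q"
    using assms by (auto simp: Phi_Pair field_simps power2_eq_square)
  moreover have "1 / q < 1 / p"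
    using assms(1,2) by (simp add: frac_less2)
  ultimately show "p' * (u' + 1) < q' * (v' + 1)"
    using \<open>p' < q'\<close> assms(4) by linarith
qed

lemma trajectory_step:
  assumes "trajectory n p u" "j < n"
  shows "Phi (p j, u j) = (p (Suc j), u (Suc j))"
  using assms unfolding trajectory_def by (metis Suc_leI diff_Suc_1 le_add1 plus_1_eq_Suc)

lemma trajectory_p_pos: "trajectory n p u \<Longrightarrow> j < n \<Longrightarrow> 0 < p j"
  by (simp add: trajectory_def)

lemma trajectory_u_nonneg:
  assumes T: "trajectory n p u" and "j \<le> n"
  shows "0 \<le> u j"
proof (cases j)
  case 0
  then show ?thesis using T by (simp add: trajectory_def)
next
  case (Suc i)
  then have "u j = 1 / p i" "0 < p i"
    using trajectory_step[OF T, of i] trajectory_p_pos[OF T, of i] \<open>j \<le> n\<close>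
    by (auto simp: Phi_Pair)
  then show ?thesis by simp
qed

lemma trajectory_eqI:
  assumes T: "trajectory n p u" and T': "trajectory n q v" and "p 0 = q 0" and "j \<le> n"
  shows "p j = q j \<and> u j = v j"
  using \<open>j \<le> n\<close>
proof (induction j)
  case 0
  then show ?case using T T' \<open>p 0 = q 0\<close> by (simp add: trajectory_def)
next
  case (Suc j)
  then show ?case using trajectory_step[OF T, of j] trajectory_step[OF T', of j] by simp
qed

lemma trajectory_strict_mono:
  assumes T: "trajectory n p u" and T': "trajectory n q v" and "p 0 < q 0" and "j < n"
  shows "p j < q j \<and> p j * (u j + 1) < q j * (v j + 1)"
  using \<open>j < n\<close>
proof (induction j)
  case 0
  then show ?case using T T' \<open>p 0 < q 0\<close> by (simp add: trajectory_def)
next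
  case (Suc j)
  then have "j < n" and IH: "p j < q j" "p j * (u j + 1) < q j * (v j + 1)"
    by auto
  then have "0 < p j * (u j + 1)"
    using trajectory_p_pos[OF T] trajectory_u_nonneg[OF T, of j] by simp
  then show ?case
    using Phi_strict_mono[OF trajectory_p_pos[OF T \<open>j < n\<close>] IH(1) _ IH(2)
        trajectory_step[OF T \<open>j < n\<close>] trajectory_step[OF T' \<open>j < n\<close>]]
    by simp
qed

lemma trajectory_start_unique:
  assumes "trajectory n p u" and "trajectory n q v"
  shows "p 0 = q 0"
proof -
  have no_smaller_start: False if T: "trajectory n p u" and T': "trajectory n q v"
    and "p 0 < q 0" for p u q v
  proof -
    have n: "n - 1 < n" "Suc (n - 1) = n" and ends: "p n = 0" "q n = 0"
      using T T' by (auto simp: trajectory_def)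
    have "0 < p (n - 1) * (u (n - 1) + 1)"
      using trajectory_p_pos[OF T n(1)] trajectory_u_nonneg[OF T, of "n - 1"] by simp
    then have "p n < q n"
      using Phi_strict_mono(1)[OF trajectory_p_pos[OF T n(1)] _ _ _
          trajectory_step[OF T n(1)] trajectory_step[OF T' n(1)]]
        trajectory_strict_mono[OF T T' \<open>p 0 < q 0\<close> n(1)] n(2) by simp
    with ends show False by simp
  qed
  show ?thesis
    using no_smaller_start[OF assms] no_smaller_start[OF assms(2,1)] by fastforce
qed

lemma trajectory_reverse:
  assumes T: "trajectory n p u"
  shows "trajectory n (\<lambda>j. u (n - j)) (\<lambda>j. p (n - j))"
  unfolding trajectory_def
proof (intro conjI allI impI)
  show "1 \<le> n" "p (n - 0) = 0" "u (n - n) = 0"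
    using T by (auto simp: trajectory_def)
next
  fix j assume "j < n"
  then have i: "n - Suc j < n" "Suc (n - Suc j) = n - j"
    by arith+
  have "u (n - j) = 1 / p (n - Suc j)"
    using trajectory_step[OF T i(1)] unfolding i(2) Phi_Pair by simp
  then show "0 < u (n - j)"
    using trajectory_p_pos[OF T i(1)] by simp
next
  fix j assume "1 \<le> j \<and> j \<le> n"
  then have i: "n - j < n" "n - (j - 1) = Suc (n - j)"
    by arith+
  have nonzero: "p (n - j) \<noteq> 0"
    using trajectory_p_pos[OF T i(1)] by simp
  show "(u (n - j), p (n - j)) = Phi (u (n - (j - 1)), p (n - (j - 1)))"
    unfolding i(2) using Phi_swap_inverse[OF nonzero trajectory_step[OF T i(1)]] ..
qed

lemma trajectory_u_eq_reverse_p: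
  assumes T: "trajectory n p u" and "j \<le> n"
  shows "u j = p (n - j)"
proof -
  have "p 0 = u n"
    using trajectory_start_unique[OF T trajectory_reverse[OF T]] by simp
  then show ?thesis
    using trajectory_eqI[OF T trajectory_reverse[OF T], of "n - j"] \<open>j \<le> n\<close> by simp
qed

lemma trajectory_odd_middle:
  assumes T: "trajectory n p u" and k: "n + 1 = 2 * k"
  shows "p (k - 1) = 1" and "u k = 1"
proof -
  have mid: "k - 1 < n" "Suc (k - 1) = k" "n - k = k - 1"
    using k T by (auto simp: trajectory_def)
  have "u k = p (k - 1)"
    using trajectory_u_eq_reverse_p[OF T, of k] mid by simp
  moreover have "u k = 1 / p (k - 1)" "0 < p (k - 1)"
    using trajectory_step[OF T mid(1)] trajectory_p_pos[OF T mid(1)] mid(2)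
    by (auto simp: Phi_Pair)
  ultimately have "p (k - 1) * p (k - 1) = 1" and "0 < p (k - 1)"
    by (auto simp: field_simps)
  then show "p (k - 1) = 1"
    using square_eq_1_iff[of "p (k - 1)"] by auto
  with \<open>u k = p (k - 1)\<close> show "u k = 1" by simp
qed

theorem lemma3:
  shows "((\<forall>p u. u \<noteq> 0 \<longrightarrow> Phi (sigma (Phi (sigma (p, u)))) = (p, u)) \<and>
          (\<forall>p u. p \<noteq> 0 \<longrightarrow> sigma (Phi (sigma (Phi (p, u)))) = (p, u))) \<and>
         (\<forall>n p u. trajectory n p u \<longrightarrow>
            (\<forall>j\<le>n. u j = p (n - j)) \<and> u n = p 0 \<and>
            (\<forall>k. n = 2 * k \<longrightarrow> p k = u k) \<and>
            (\<forall>k. n + 1 = 2 * k \<longrightarrow> p (k - 1) = 1 \<and> u k = 1))"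
proof (intro conjI allI impI)
  fix n p u assume T: "trajectory n p u"
  show "u j = p (n - j)" if "j \<le> n" for j
    using trajectory_u_eq_reverse_p[OF T that] .
  show "u n = p 0"
    using trajectory_u_eq_reverse_p[OF T, of n] by simp
  show "p k = u k" if "n = 2 * k" for k
    using trajectory_u_eq_reverse_p[OF T, of k] that by simp
  show "p (k - 1) = 1" "u k = 1" if "n + 1 = 2 * k" for k
    using trajectory_odd_middle[OF T that] by auto
qed (fact Phi_sigma_Phi_sigma sigma_Phi_sigma_Phi)+

end
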